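(* Let $d\ge 0$ be an integer and $r,s\in(-1,\infty)$ with $r\neq0$ and $r+s=0$. Let $\alpha=-d-1$, $\beta=r$, $\gamma=\frac{r-d-1}{2}$, $\delta=-\frac{r+d}{2}-1$ (so $N=d$), and for $0\le i\le d$ let $R_i(y)$ be the Racah polynomial $$R_i(y)=\sum_{k=0}^{i}\frac{(-i)_k(i+\alpha+\beta+1)_k}{(\alpha+1)_k(\beta+\delta+1)_k(\gamma+1)_k\,k!}\prod_{l=0}^{k-1}\bigl(l(l+\gamma+\delta+1)-y\bigr).$$ Then: (a) for every $0\le i\le d$, $u_i(4y+d(d+1))=R_i(y)$ as polynomials in $y$; (b) for $0\le j\le d$ the points $\bar\theta_j:=4j(j+\gamma+\delta+1)+d(d+1)=(d-2j)(d-2j+1)$ satisfy $\bar\theta_j=\theta_{2j}$ if $0\le j\le\lfloor d/2\rfloor$ and $\bar\theta_j=\theta_{2(d-j)+1}$ if $\lfloor d/2\rfloor<j\le d$, so $\{\bar\theta_j\}_{j=0}^d=\{\theta_j\}_{j=0}^d$; (c) the Racah weights $\bar k^*_j$ satisfy $\bar k^*_j=k^*_{2j}$ if $0\le j\le\lfloor d/2\rfloor$ and $\bar k^*_j=k^*_{2(d-j)+1}$ if $\lfloor d/2\rfloor<j\le d$. In other words, the dual Hahn polynomials $u_0,\dots,u_d$ are also Racah polynomials, orthogonal on the same points $\theta_0,\dots,\theta_d$ with the same weights $k^*_0,\dots,k^*_d$.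
   Context: Write $(x)_i=x(x+1)\cdots(x+i-1)$, $(x)_0=1$, and ${}_3F_2\left(\genfrac..{0pt}{}{a_1,a_2,a_3}{b_1,b_2}\,\middle|\,1\right)=\sum_{n\ge0}\frac{(a_1)_n(a_2)_n(a_3)_n}{(b_1)_n(b_2)_n n!}$ (a terminating sum here). For $0\le i\le d$ put $\theta_i=(d-i)(d-i+r+s+1)$ (these are distinct). Let $u_0,\dots,u_d$ be the unique real polynomials of degree at most $d$ with $u_i(\theta_j)={}_3F_2\left(\genfrac..{0pt}{}{-i,-j,j-r-s-2d-1}{-s-d,-d}\,\middle|\,1\right)$ for $0\le i,j\le d$ (the dual Hahn polynomials). Put $b^*_i=\frac{(d-i)(i-d-s)(2d-2i+r+s+2)_i}{(2d-2i+r+s)_{i+1}}$ ($0\le i\le d-1$), $c^*_i=\frac{i(i-d-r-1)(d-i+r+s+1)_{d-i}}{(d-i+r+s+2)_{d-i+1}}$ ($1\le i\le d$), and $k^*_i=\frac{b^*_0\cdots b^*_{i-1}}{c^*_1\cdots c^*_i}$ ($0\le i\le d$); the $u_i$ are orthogonal with respect to $\langle f,g\rangle=\sum_h f(\theta_h)g(\theta_h)k^*_h$. The Racah weights are defined by $\bar b^*_i=\frac{(d-i)(2d-2i+1)(d-2i-r-1)(d-2i-r)}{2(2d-4i-1)(2d-4i+1)}$ ($0\le i\le d-1$), $\bar c^*_i=\frac{i(2i-1)(d-2i+r+1)(d-2i+r+2)}{2(2d-4i+1)(2d-4i+3)}$ ($1\le i\le d$), and $\bar k^*_j=\frac{\bar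 b^*_0\cdots\bar b^*_{j-1}}{\bar c^*_1\cdots\bar c^*_j}$ ($0\le j\le d$). *)

theory Defs
  imports "HOL-Computational_Algebra.Polynomial"
begin

text \<open>Terminating generalized hypergeometric series 3F2 at argument 1, summed up to
  index M (all later terms vanish because an upper parameter is -i, and we use M = i).\<close>
definition hyp3F2 :: "nat \<Rightarrow> real \<Rightarrow> real \<Rightarrow> real \<Rightarrow> real \<Rightarrow> real \<Rightarrow> real" where
  "hyp3F2 M a1 a2 a3 b1 b2 =
     (\<Sum>n\<le>M. pochhammer a1 n * pochhammer a2 n * pochhammer a3 n
              / (pochhammer b1 n * pochhammer b2 n * fact n))"

definition theta :: "nat \<Rightarrow> real \<Rightarrow> real \<Rightarrow> nat \<Rightarrow> real" where
  "theta d r s i = real (d - i) * (real (d - i) + r + s + 1)"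

definition dual_hahn_val :: "nat \<Rightarrow> real \<Rightarrow> real \<Rightarrow> nat \<Rightarrow> nat \<Rightarrow> real" where
  "dual_hahn_val d r s i j =
     hyp3F2 i (- real i) (- real j) (real j - r - s - 2 * real d - 1) (- s - real d) (- real d)"

definition dual_hahn :: "nat \<Rightarrow> real \<Rightarrow> real \<Rightarrow> nat \<Rightarrow> real poly" where
  "dual_hahn d r s i = (THE p. degree p \<le> d \<and>
      (\<forall>j\<le>d. poly p (theta d r s j) = dual_hahn_val d r s i j))"

definition bstar :: "nat \<Rightarrow> real \<Rightarrow> real \<Rightarrow> nat \<Rightarrow> real" where
  "bstar d r s i = real (d - i) * (real i - real d - s)
      * pochhammer (2 * real d - 2 * real i + r + s + 2) i
      / pochhammer (2 * real d - 2 * real i + r + s) (i + 1)"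

definition cstar :: "nat \<Rightarrow> real \<Rightarrow> real \<Rightarrow> nat \<Rightarrow> real" where
  "cstar d r s i = real i * (real i - real d - r - 1)
      * pochhammer (real d - real i + r + s + 1) (d - i)
      / pochhammer (real d - real i + r + s + 2) (d - i + 1)"

definition kstar :: "nat \<Rightarrow> real \<Rightarrow> real \<Rightarrow> nat \<Rightarrow> real" where
  "kstar d r s i = (\<Prod>l<i. bstar d r s l) / (\<Prod>l\<in>{1..i}. cstar d r s l)"

definition bbar :: "nat \<Rightarrow> real \<Rightarrow> nat \<Rightarrow> real" where
  "bbar d r i = real (d - i) * (2 * real d - 2 * real i + 1)
      * (real d - 2 * real i - r - 1) * (real d - 2 * real i - r)
      / (2 * (2 * real d - 4 * real i - 1) * (2 * real d - 4 * real i + 1))"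

definition cbar :: "nat \<Rightarrow> real \<Rightarrow> nat \<Rightarrow> real" where
  "cbar d r i = real i * (2 * real i - 1)
      * (real d - 2 * real i + r + 1) * (real d - 2 * real i + r + 2)
      / (2 * (2 * real d - 4 * real i + 1) * (2 * real d - 4 * real i + 3))"

definition kbar :: "nat \<Rightarrow> real \<Rightarrow> nat \<Rightarrow> real" where
  "kbar d r j = (\<Prod>l<j. bbar d r l) / (\<Prod>l\<in>{1..j}. cbar d r l)"

definition racah_poly :: "real \<Rightarrow> real \<Rightarrow> real \<Rightarrow> real \<Rightarrow> nat \<Rightarrow> real poly" where
  "racah_poly \<alpha> \<beta> \<gamma> \<delta> i =
     (\<Sum>k\<le>i. smult (pochhammer (- real i) k * pochhammer (real i + \<alpha> + \<beta> + 1) k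
                 / (pochhammer (\<alpha> + 1) k * pochhammer (\<beta> + \<delta> + 1) k
                    * pochhammer (\<gamma> + 1) k * fact k))
               (\<Prod>l<k. [: real l * (real l + \<gamma> + \<delta> + 1), -1 :]))"

end

theory Submission
  imports Defs
begin

(* Both u_i(4y + d(d + 1)) and R_i(y) are sums in Newton form over quadratic lattices, and each
   family satisfies a three-term recurrence in i.  For the parameters at hand the recurrence
   coefficients of the Racah polynomials are exactly a quarter of those of the dual Hahn
   polynomials, which become the same recurrence after the substitution x = 4y + d(d + 1); as both
   families start with 1, they coincide.  The Racah nodes are the values of x(x + 1) at
   x = d - 2j, and x(x + 1) is invariant under x -> -1 - x, so each of them is a dual Hahn node
   theta_(sigma j), where sigma j = 2j or 2(d - j) + 1.  Finally, both weight sequences are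
   products of consecutive ratios, and the ratio of consecutive Racah weights at j equals the
   product of the dual Hahn ratios met when passing from sigma j to sigma (j + 1). *)

section \<open>Polynomials in Newton form over a lattice\<close>

definition newton_poly :: "(nat \<Rightarrow> 'a::comm_ring_1) \<Rightarrow> (nat \<Rightarrow> 'a) \<Rightarrow> nat \<Rightarrow> 'a poly" where
  "newton_poly t \<mu> n = (\<Sum>k\<le>n. smult (t k) (\<Prod>l<k. [:\<mu> l, -1:]))"

lemma poly_newton_poly: "poly (newton_poly t \<mu> n) y = (\<Sum>k\<le>n. t k * (\<Prod>l<k. \<mu> l - y))"
  by (simp add: newton_poly_def poly_sum poly_prod)

lemma degree_newton_poly: "degree (newton_poly t \<mu> n) \<le> n"
  unfolding newton_poly_def
proof (rule degree_sum_le)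
  fix k assume "k \<in> {..n}"
  have "degree (smult (t k) (\<Prod>l<k. [:\<mu> l, -1:])) \<le> degree (\<Prod>l<k. [:\<mu> l, -1:])"
    by (rule degree_smult_le)
  also have "\<dots> \<le> sum (degree \<circ> (\<lambda>l. [:\<mu> l, -1:])) {..<k}"
    by (rule degree_prod_sum_le) simp
  also have "\<dots> \<le> n"
    using \<open>k \<in> {..n}\<close> by simp
  finally show "degree (smult (t k) (\<Prod>l<k. [:\<mu> l, -1:])) \<le> n" .
qed simp

lemma newton_poly_extend:
  assumes "n \<le> N" and "\<And>k. n < k \<Longrightarrow> t k = 0"
  shows "newton_poly t \<mu> n = newton_poly t \<mu> N"
  unfolding newton_poly_def by (rule sum.mono_neutral_left) (use assms in auto)

lemma mult_poly_newton_poly: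
  assumes "t N = 0"
  shows "y * poly (newton_poly t \<mu> N) y
       = poly (newton_poly (\<lambda>k. \<mu> k * t k - (if k = 0 then 0 else t (k - 1))) \<mu> N) y"
proof -
  let ?P = "\<lambda>k. \<Prod>l<k. \<mu> l - y"
  have "(\<Sum>k\<le>M. t k * ?P (Suc k))
      = (\<Sum>k\<le>M. (if k = 0 then 0 else t (k - 1)) * ?P k) + t M * ?P (Suc M)" for M
    by (induction M) simp_all
  then have shift: "(\<Sum>k\<le>N. t k * ?P (Suc k)) = (\<Sum>k\<le>N. (if k = 0 then 0 else t (k - 1)) * ?P k)"
    using assms by simp
  have "y * poly (newton_poly t \<mu> N) y = (\<Sum>k\<le>N. \<mu> k * t k * ?P k) - (\<Sum>k\<le>N. t k * ?P (Suc k))"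
    by (simp add: poly_newton_poly sum_distrib_left sum_subtractf[symmetric] algebra_simps)
  also have "\<dots> = poly (newton_poly (\<lambda>k. \<mu> k * t k - (if k = 0 then 0 else t (k - 1))) \<mu> N) y"
    unfolding shift poly_newton_poly by (simp add: sum_subtractf[symmetric] algebra_simps)
  finally show ?thesis .
qed

lemma poly_newton_poly_three_term:
  fixes t :: "nat \<Rightarrow> nat \<Rightarrow> 'a::comm_ring_1"
  assumes "t n N = 0"
    and "\<And>k. k \<le> N \<Longrightarrow> \<mu> k * t n k - (if k = 0 then 0 else t n (k - 1))
            = A * t (Suc n) k - B * t n k + C * t (n - 1) k"
  shows "y * poly (newton_poly (t n) \<mu> N) y = A * poly (newton_poly (t (Suc n)) \<mu> N) y
           - B * poly (newton_poly (t n) \<mu> N) y + C * poly (newton_poly (t (n - 1)) \<mu> N) y"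
proof -
  have "y * poly (newton_poly (t n) \<mu> N) y
      = poly (newton_poly (\<lambda>k. \<mu> k * t n k - (if k = 0 then 0 else t n (k - 1))) \<mu> N) y"
    by (rule mult_poly_newton_poly) (rule assms(1))
  also have "\<dots> = (\<Sum>k\<le>N. (A * t (Suc n) k - B * t n k + C * t (n - 1) k) * (\<Prod>l<k. \<mu> l - y))"
    unfolding poly_newton_poly by (rule sum.cong) (simp_all add: assms(2))
  finally show ?thesis
    by (simp add: poly_newton_poly sum.distrib sum_subtractf sum_distrib_left mult.assoc
        left_diff_distrib distrib_right)
qed

(* At i = 0 the recurrence involves p (0 - 1) = p 0, so p 0 alone is the initial value. *)
lemma three_term_recurrence_unique:
  fixes p q :: "nat \<Rightarrow> 'a::field"
  assumes "p 0 = q 0"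
    and "\<And>i. i < n \<Longrightarrow> A i \<noteq> 0"
    and "\<And>i. i < n \<Longrightarrow> y * p i = A i * p (Suc i) - B i * p i + C i * p (i - 1)"
    and "\<And>i. i < n \<Longrightarrow> y * q i = A i * q (Suc i) - B i * q i + C i * q (i - 1)"
  shows "p n = q n"
proof -
  have "\<forall>i\<le>m. p i = q i" if "m \<le> n" for m
    using that
  proof (induction m)
    case 0
    then show ?case using assms(1) by simp
  next
    case (Suc m)
    have "A m * p (Suc m) = A m * q (Suc m)"
      using assms(3,4)[of m] Suc by (auto simp: algebra_simps)
    then have "p (Suc m) = q (Suc m)"
      using assms(2)[of m] Suc.prems by simp
    then show ?case using Suc by (auto simp: le_Suc_eq)
  qed
  then show ?thesis by blast
qed

section \<open>The three-term recurrence of the Racah polynomials\<close>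

definition racah_lattice :: "real \<Rightarrow> real \<Rightarrow> nat \<Rightarrow> real" where
  "racah_lattice \<gamma> \<delta> l = real l * (real l + \<gamma> + \<delta> + 1)"

definition racah_coeff :: "real \<Rightarrow> real \<Rightarrow> real \<Rightarrow> real \<Rightarrow> nat \<Rightarrow> nat \<Rightarrow> real" where
  "racah_coeff \<alpha> \<beta> \<gamma> \<delta> n k = pochhammer (- real n) k * pochhammer (real n + \<alpha> + \<beta> + 1) k
     / (pochhammer (\<alpha> + 1) k * pochhammer (\<beta> + \<delta> + 1) k * pochhammer (\<gamma> + 1) k * fact k)"

lemma racah_poly_eq_newton_poly:
  "racah_poly \<alpha> \<beta> \<gamma> \<delta> n = newton_poly (racah_coeff \<alpha> \<beta> \<gamma> \<delta> n) (racah_lattice \<gamma> \<delta>) n"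
  by (simp add: racah_poly_def newton_poly_def racah_coeff_def racah_lattice_def)

lemma racah_coeff_0 [simp]: "racah_coeff \<alpha> \<beta> \<gamma> \<delta> n 0 = 1"
  by (simp add: racah_coeff_def)

lemma racah_coeff_eq_0: "n < k \<Longrightarrow> racah_coeff \<alpha> \<beta> \<gamma> \<delta> n k = 0"
  by (simp add: racah_coeff_def pochhammer_of_nat_eq_0_lemma)

lemma racah_coeff_Suc:
  "racah_coeff \<alpha> \<beta> \<gamma> \<delta> n (Suc m) = racah_coeff \<alpha> \<beta> \<gamma> \<delta> n m
     * ((real m - real n) * (real n + \<alpha> + \<beta> + 1 + real m)
        / ((\<alpha> + 1 + real m) * (\<beta> + \<delta> + 1 + real m) * (\<gamma> + 1 + real m) * (real m + 1)))"
  by (simp add: racah_coeff_def pochhammer_Suc divide_inverse inverse_mult_distrib mult_ac)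

lemma racah_coeff_Suc_Suc:
  "(real n + \<alpha> + \<beta> + 1) * racah_coeff \<alpha> \<beta> \<gamma> \<delta> (Suc n) (Suc m) = racah_coeff \<alpha> \<beta> \<gamma> \<delta> n m
     * ((- real n - 1) * (real n + \<alpha> + \<beta> + 1 + real m) * (real n + \<alpha> + \<beta> + 2 + real m)
        / ((\<alpha> + 1 + real m) * (\<beta> + \<delta> + 1 + real m) * (\<gamma> + 1 + real m) * (real m + 1)))"
proof -
  have "pochhammer (- real (Suc n)) (Suc m) = - (real n + 1) * pochhammer (- real n) m"
    by (simp add: pochhammer_rec)
  moreover have "(real n + \<alpha> + \<beta> + 1) * pochhammer (real (Suc n) + \<alpha> + \<beta> + 1) (Suc m)
      = pochhammer (real n + \<alpha> + \<beta> + 1) m * (real n + \<alpha> + \<beta> + 1 + real m) * (real n + \<alpha> + \<beta> + 2 + real m)"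
    using pochhammer_rec[of "real n + \<alpha> + \<beta> + 1" "Suc m"]
    by (simp add: pochhammer_Suc algebra_simps)
  ultimately show ?thesis
    by (simp add: racah_coeff_def pochhammer_Suc divide_inverse inverse_mult_distrib mult_ac)
qed

lemma pochhammer_minus_pred_Suc:
  "real n * pochhammer (- real (n - 1)) (Suc m)
     = pochhammer (- real n) m * ((real n - real m) * (real m - real n + 1))"
proof (cases n)
  case 0
  then show ?thesis by (cases m) (simp_all add: pochhammer_0_left)
next
  case (Suc p)
  have "- real (Suc p) * pochhammer (- real p) (Suc m) = pochhammer (- real (Suc p)) (Suc (Suc m))"
    using pochhammer_rec[of "- real (Suc p)" "Suc m"] by simp
  also have "\<dots> = pochhammer (- real (Suc p)) m * (real m - real (Suc p)) * (real m - real (Suc p) + 1)"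
    by (simp add: pochhammer_Suc algebra_simps)
  finally show ?thesis
    unfolding Suc by (simp add: algebra_simps)
qed

lemma racah_coeff_pred_Suc:
  "real n * racah_coeff \<alpha> \<beta> \<gamma> \<delta> (n - 1) (Suc m) = racah_coeff \<alpha> \<beta> \<gamma> \<delta> n m
     * ((real n - real m) * (real m - real n + 1) * (real n + \<alpha> + \<beta>)
        / ((\<alpha> + 1 + real m) * (\<beta> + \<delta> + 1 + real m) * (\<gamma> + 1 + real m) * (real m + 1)))"
proof (cases n)
  case 0
  then show ?thesis by (cases m) (simp_all add: racah_coeff_eq_0)
next
  case (Suc p)
  have lower: "real (Suc p) * pochhammer (- real p) (Suc m)
      = pochhammer (- real (Suc p)) m * ((real (Suc p) - real m) * (real m - real (Suc p) + 1))"
    using pochhammer_minus_pred_Suc[of "Suc p" m] by simp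
  have upper: "pochhammer (real p + \<alpha> + \<beta> + 1) (Suc m)
      = (real (Suc p) + \<alpha> + \<beta>) * pochhammer (real (Suc p) + \<alpha> + \<beta> + 1) m"
    by (simp add: pochhammer_rec algebra_simps)
  have num: "real (Suc p) * (pochhammer (- real p) (Suc m) * pochhammer (real p + \<alpha> + \<beta> + 1) (Suc m))
      = pochhammer (- real (Suc p)) m * pochhammer (real (Suc p) + \<alpha> + \<beta> + 1) m
        * ((real (Suc p) - real m) * (real m - real (Suc p) + 1) * (real (Suc p) + \<alpha> + \<beta>))"
    unfolding mult.assoc[symmetric] lower upper by (simp add: algebra_simps)
  have den: "pochhammer (\<alpha> + 1) (Suc m) * pochhammer (\<beta> + \<delta> + 1) (Suc m) * pochhammer (\<gamma> + 1) (Suc m)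
        * fact (Suc m)
      = pochhammer (\<alpha> + 1) m * pochhammer (\<beta> + \<delta> + 1) m * pochhammer (\<gamma> + 1) m * fact m
        * ((\<alpha> + 1 + real m) * (\<beta> + \<delta> + 1 + real m) * (\<gamma> + 1 + real m) * (real m + 1))"
    by (simp add: pochhammer_Suc algebra_simps)
  show ?thesis
    unfolding Suc racah_coeff_def diff_Suc_1 times_divide_eq_right[of "real (Suc p)"] num den
    by (rule times_divide_times_eq[symmetric])
qed

definition racah_A :: "real \<Rightarrow> real \<Rightarrow> real \<Rightarrow> real \<Rightarrow> nat \<Rightarrow> real" where
  "racah_A \<alpha> \<beta> \<gamma> \<delta> n = (real n + \<alpha> + 1) * (real n + \<alpha> + \<beta> + 1) * (real n + \<beta> + \<delta> + 1) * (real n + \<gamma> + 1)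
     / ((2 * real n + \<alpha> + \<beta> + 1) * (2 * real n + \<alpha> + \<beta> + 2))"

definition racah_C :: "real \<Rightarrow> real \<Rightarrow> real \<Rightarrow> real \<Rightarrow> nat \<Rightarrow> real" where
  "racah_C \<alpha> \<beta> \<gamma> \<delta> n = real n * (real n + \<alpha> + \<beta> - \<gamma>) * (real n + \<alpha> - \<delta>) * (real n + \<beta>)
     / ((2 * real n + \<alpha> + \<beta>) * (2 * real n + \<alpha> + \<beta> + 1))"

lemma racah_coeff_ratio_identity:
  assumes "(2 * real n + \<alpha> + \<beta>) * (2 * real n + \<alpha> + \<beta> + 1) * (2 * real n + \<alpha> + \<beta> + 2) \<noteq> 0"
  obtains A' C' where "racah_A \<alpha> \<beta> \<gamma> \<delta> n = (real n + \<alpha> + \<beta> + 1) * A'"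
    and "racah_C \<alpha> \<beta> \<gamma> \<delta> n = real n * C'"
    and "racah_lattice \<gamma> \<delta> (Suc m) * (real m - real n) * (real n + \<alpha> + \<beta> + 1 + real m)
         - (\<alpha> + 1 + real m) * (\<beta> + \<delta> + 1 + real m) * (\<gamma> + 1 + real m) * (real m + 1)
       = A' * (- real n - 1) * (real n + \<alpha> + \<beta> + 1 + real m) * (real n + \<alpha> + \<beta> + 2 + real m)
         - (racah_A \<alpha> \<beta> \<gamma> \<delta> n + racah_C \<alpha> \<beta> \<gamma> \<delta> n) * (real m - real n) * (real n + \<alpha> + \<beta> + 1 + real m)
         + C' * (real n - real m) * (real m - real n + 1) * (real n + \<alpha> + \<beta>)"
proof -
  define e where "e = \<alpha> + \<beta> + 1"
  define A' where "A' = (real n + \<alpha> + 1) * (real n + \<beta> + \<delta> + 1) * (real n + \<gamma> + 1)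
      / ((2 * real n + e) * (2 * real n + e + 1))"
  define C' where "C' = (real n + e - \<gamma> - 1) * (real n + \<alpha> - \<delta>) * (real n + \<beta>)
      / ((2 * real n + e - 1) * (2 * real n + e))"
  have A: "racah_A \<alpha> \<beta> \<gamma> \<delta> n = (real n + \<alpha> + \<beta> + 1) * A'"
    by (simp add: racah_A_def A'_def e_def algebra_simps)
  have C: "racah_C \<alpha> \<beta> \<gamma> \<delta> n = real n * C'"
    by (simp add: racah_C_def C'_def e_def algebra_simps)
  have "2 * real n + \<alpha> + \<beta> \<noteq> 0" "2 * real n + \<alpha> + \<beta> + 1 \<noteq> 0" "2 * real n + \<alpha> + \<beta> + 2 \<noteq> 0"
    using assms by simp_all
  then have nz: "2 * real n + e - 1 \<noteq> 0" "2 * real n + e \<noteq> 0" "2 * real n + e + 1 \<noteq> 0"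
    unfolding e_def by (simp_all add: algebra_simps)
  then have "A' * ((2 * real n + e) * (2 * real n + e + 1))
      = (real n + \<alpha> + 1) * (real n + \<beta> + \<delta> + 1) * (real n + \<gamma> + 1)"
    and "C' * ((2 * real n + e - 1) * (2 * real n + e))
      = (real n + e - \<gamma> - 1) * (real n + \<alpha> - \<delta>) * (real n + \<beta>)"
    by (simp_all add: A'_def C'_def)
  then have "racah_lattice \<gamma> \<delta> (Suc m) * (real m - real n) * (real n + \<alpha> + \<beta> + 1 + real m)
         - (\<alpha> + 1 + real m) * (\<beta> + \<delta> + 1 + real m) * (\<gamma> + 1 + real m) * (real m + 1)
       = A' * (- real n - 1) * (real n + \<alpha> + \<beta> + 1 + real m) * (real n + \<alpha> + \<beta> + 2 + real m)
         - (racah_A \<alpha> \<beta> \<gamma> \<delta> n + racah_C \<alpha> \<beta> \<gamma> \<delta> n) * (real m - real n) * (real n + \<alpha> + \<beta> + 1 + real m)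
         + C' * (real n - real m) * (real m - real n + 1) * (real n + \<alpha> + \<beta>)"
    using nz e_def unfolding A C racah_lattice_def of_nat_Suc by algebra
  then show ?thesis
    by (rule that[OF A C])
qed

lemma racah_coeff_recurrence:
  assumes "0 < k \<Longrightarrow> (\<alpha> + real k) * (\<beta> + \<delta> + real k) * (\<gamma> + real k) \<noteq> 0"
    and "(2 * real n + \<alpha> + \<beta>) * (2 * real n + \<alpha> + \<beta> + 1) * (2 * real n + \<alpha> + \<beta> + 2) \<noteq> 0"
  shows "racah_lattice \<gamma> \<delta> k * racah_coeff \<alpha> \<beta> \<gamma> \<delta> n k
           - (if k = 0 then 0 else racah_coeff \<alpha> \<beta> \<gamma> \<delta> n (k - 1))
         = racah_A \<alpha> \<beta> \<gamma> \<delta> n * racah_coeff \<alpha> \<beta> \<gamma> \<delta> (Suc n) k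
           - (racah_A \<alpha> \<beta> \<gamma> \<delta> n + racah_C \<alpha> \<beta> \<gamma> \<delta> n) * racah_coeff \<alpha> \<beta> \<gamma> \<delta> n k
           + racah_C \<alpha> \<beta> \<gamma> \<delta> n * racah_coeff \<alpha> \<beta> \<gamma> \<delta> (n - 1) k"
proof (cases k)
  case 0
  then show ?thesis by (simp add: racah_lattice_def)
next
  case (Suc m)
  define t where "t = racah_coeff \<alpha> \<beta> \<gamma> \<delta>"
  define D where "D = (\<alpha> + 1 + real m) * (\<beta> + \<delta> + 1 + real m) * (\<gamma> + 1 + real m) * (real m + 1)"
  have "(\<alpha> + 1 + real m) * (\<beta> + \<delta> + 1 + real m) * (\<gamma> + 1 + real m) \<noteq> 0"
    using assms(1) by (simp add: Suc algebra_simps)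
  then have "D \<noteq> 0"
    unfolding D_def by simp
  have t_Suc: "D * t n (Suc m) = t n m * (real m - real n) * (real n + \<alpha> + \<beta> + 1 + real m)"
    using \<open>D \<noteq> 0\<close> unfolding t_def D_def racah_coeff_Suc by simp
  have t_Suc_Suc: "D * ((real n + \<alpha> + \<beta> + 1) * t (Suc n) (Suc m))
      = t n m * (- real n - 1) * (real n + \<alpha> + \<beta> + 1 + real m) * (real n + \<alpha> + \<beta> + 2 + real m)"
    using \<open>D \<noteq> 0\<close> unfolding t_def D_def racah_coeff_Suc_Suc by (simp add: mult.assoc)
  have t_pred: "D * (real n * t (n - 1) (Suc m))
      = t n m * (real n - real m) * (real m - real n + 1) * (real n + \<alpha> + \<beta>)"
    using \<open>D \<noteq> 0\<close> unfolding t_def D_def racah_coeff_pred_Suc by simp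
  obtain A' C' where A: "racah_A \<alpha> \<beta> \<gamma> \<delta> n = (real n + \<alpha> + \<beta> + 1) * A'"
    and C: "racah_C \<alpha> \<beta> \<gamma> \<delta> n = real n * C'" and key: "racah_lattice \<gamma> \<delta> (Suc m) * (real m - real n)
        * (real n + \<alpha> + \<beta> + 1 + real m) - D
      = A' * (- real n - 1) * (real n + \<alpha> + \<beta> + 1 + real m) * (real n + \<alpha> + \<beta> + 2 + real m)
        - (racah_A \<alpha> \<beta> \<gamma> \<delta> n + racah_C \<alpha> \<beta> \<gamma> \<delta> n) * (real m - real n) * (real n + \<alpha> + \<beta> + 1 + real m)
        + C' * (real n - real m) * (real m - real n + 1) * (real n + \<alpha> + \<beta>)"
    using racah_coeff_ratio_identity[OF assms(2)] unfolding D_def by blast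
  have "D * (racah_lattice \<gamma> \<delta> (Suc m) * t n (Suc m) - t n m)
      = t n m * (racah_lattice \<gamma> \<delta> (Suc m) * (real m - real n) * (real n + \<alpha> + \<beta> + 1 + real m) - D)"
    using t_Suc by algebra
  also have "\<dots> = D * (racah_A \<alpha> \<beta> \<gamma> \<delta> n * t (Suc n) (Suc m)
      - (racah_A \<alpha> \<beta> \<gamma> \<delta> n + racah_C \<alpha> \<beta> \<gamma> \<delta> n) * t n (Suc m)
      + racah_C \<alpha> \<beta> \<gamma> \<delta> n * t (n - 1) (Suc m))"
    unfolding key using t_Suc t_Suc_Suc t_pred A C by algebra
  finally show ?thesis
    using \<open>D \<noteq> 0\<close> unfolding Suc t_def by simp
qed

lemma racah_poly_recurrence:
  assumes "n < N"
    and "\<And>k. 0 < k \<Longrightarrow> k \<le> N \<Longrightarrow> (\<alpha> + real k) * (\<beta> + \<delta> + real k) * (\<gamma> + real k) \<noteq> 0"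
    and "(2 * real n + \<alpha> + \<beta>) * (2 * real n + \<alpha> + \<beta> + 1) * (2 * real n + \<alpha> + \<beta> + 2) \<noteq> 0"
  shows "y * poly (racah_poly \<alpha> \<beta> \<gamma> \<delta> n) y
       = racah_A \<alpha> \<beta> \<gamma> \<delta> n * poly (racah_poly \<alpha> \<beta> \<gamma> \<delta> (Suc n)) y
         - (racah_A \<alpha> \<beta> \<gamma> \<delta> n + racah_C \<alpha> \<beta> \<gamma> \<delta> n) * poly (racah_poly \<alpha> \<beta> \<gamma> \<delta> n) y
         + racah_C \<alpha> \<beta> \<gamma> \<delta> n * poly (racah_poly \<alpha> \<beta> \<gamma> \<delta> (n - 1)) y"
proof -
  have extend: "racah_poly \<alpha> \<beta> \<gamma> \<delta> m = newton_poly (racah_coeff \<alpha> \<beta> \<gamma> \<delta> m) (racah_lattice \<gamma> \<delta>) N"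
    if "m \<le> N" for m
    unfolding racah_poly_eq_newton_poly using that by (intro newton_poly_extend) (simp_all add: racah_coeff_eq_0)
  have "y * poly (newton_poly (racah_coeff \<alpha> \<beta> \<gamma> \<delta> n) (racah_lattice \<gamma> \<delta>) N) y
       = racah_A \<alpha> \<beta> \<gamma> \<delta> n * poly (newton_poly (racah_coeff \<alpha> \<beta> \<gamma> \<delta> (Suc n)) (racah_lattice \<gamma> \<delta>) N) y
         - (racah_A \<alpha> \<beta> \<gamma> \<delta> n + racah_C \<alpha> \<beta> \<gamma> \<delta> n) * poly (newton_poly (racah_coeff \<alpha> \<beta> \<gamma> \<delta> n) (racah_lattice \<gamma> \<delta>) N) y
         + racah_C \<alpha> \<beta> \<gamma> \<delta> n * poly (newton_poly (racah_coeff \<alpha> \<beta> \<gamma> \<delta> (n - 1)) (racah_lattice \<gamma> \<delta>) N) y"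
    using assms by (intro poly_newton_poly_three_term racah_coeff_recurrence) (simp_all add: racah_coeff_eq_0)
  then show ?thesis
    using assms(1) by (simp add: extend)
qed

section \<open>The dual Hahn polynomials and their three-term recurrence\<close>

definition dual_hahn_coeff :: "real \<Rightarrow> nat \<Rightarrow> nat \<Rightarrow> nat \<Rightarrow> real" where
  "dual_hahn_coeff \<gamma> N n k = pochhammer (- real n) k / (pochhammer (\<gamma> + 1) k * pochhammer (- real N) k * fact k)"

definition dual_hahn_poly :: "real \<Rightarrow> real \<Rightarrow> nat \<Rightarrow> nat \<Rightarrow> real poly" where
  "dual_hahn_poly \<gamma> \<delta> N n = newton_poly (dual_hahn_coeff \<gamma> N n) (racah_lattice \<gamma> \<delta>) n"

lemma dual_hahn_coeff_0 [simp]: "dual_hahn_coeff \<gamma> N n 0 = 1"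
  by (simp add: dual_hahn_coeff_def)

lemma dual_hahn_coeff_eq_0: "n < k \<Longrightarrow> dual_hahn_coeff \<gamma> N n k = 0"
  by (simp add: dual_hahn_coeff_def pochhammer_of_nat_eq_0_lemma)

lemma dual_hahn_coeff_Suc:
  "dual_hahn_coeff \<gamma> N n (Suc m) = dual_hahn_coeff \<gamma> N n m
     * ((real m - real n) / ((\<gamma> + 1 + real m) * (real m - real N) * (real m + 1)))"
  by (simp add: dual_hahn_coeff_def pochhammer_Suc divide_inverse inverse_mult_distrib mult_ac)

lemma dual_hahn_coeff_Suc_Suc:
  "dual_hahn_coeff \<gamma> N (Suc n) (Suc m) = dual_hahn_coeff \<gamma> N n m
     * ((- real n - 1) / ((\<gamma> + 1 + real m) * (real m - real N) * (real m + 1)))"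
proof -
  have "pochhammer (- real (Suc n)) (Suc m) = (- real n - 1) * pochhammer (- real n) m"
    by (simp add: pochhammer_rec)
  then show ?thesis
    by (simp add: dual_hahn_coeff_def pochhammer_Suc divide_inverse inverse_mult_distrib mult_ac)
qed

lemma dual_hahn_coeff_pred_Suc:
  "real n * dual_hahn_coeff \<gamma> N (n - 1) (Suc m) = dual_hahn_coeff \<gamma> N n m
     * ((real n - real m) * (real m - real n + 1) / ((\<gamma> + 1 + real m) * (real m - real N) * (real m + 1)))"
proof -
  have "pochhammer (\<gamma> + 1) (Suc m) * pochhammer (- real N) (Suc m) * fact (Suc m)
      = pochhammer (\<gamma> + 1) m * pochhammer (- real N) m * fact m
        * ((\<gamma> + 1 + real m) * (real m - real N) * (real m + 1))"
    by (simp add: pochhammer_Suc algebra_simps)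
  then show ?thesis
    unfolding dual_hahn_coeff_def times_divide_eq_right[of "real n"] pochhammer_minus_pred_Suc
    by (simp only: times_divide_times_eq)
qed

definition dual_hahn_A :: "real \<Rightarrow> nat \<Rightarrow> nat \<Rightarrow> real" where
  "dual_hahn_A \<gamma> N n = (real n + \<gamma> + 1) * (real n - real N)"

definition dual_hahn_C :: "real \<Rightarrow> nat \<Rightarrow> nat \<Rightarrow> real" where
  "dual_hahn_C \<delta> N n = real n * (real n - \<delta> - real N - 1)"

lemma dual_hahn_coeff_recurrence:
  assumes "0 < k \<Longrightarrow> (\<gamma> + real k) * (real k - real N - 1) \<noteq> 0"
  shows "racah_lattice \<gamma> \<delta> k * dual_hahn_coeff \<gamma> N n k
           - (if k = 0 then 0 else dual_hahn_coeff \<gamma> N n (k - 1))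
         = dual_hahn_A \<gamma> N n * dual_hahn_coeff \<gamma> N (Suc n) k
           - (dual_hahn_A \<gamma> N n + dual_hahn_C \<delta> N n) * dual_hahn_coeff \<gamma> N n k
           + dual_hahn_C \<delta> N n * dual_hahn_coeff \<gamma> N (n - 1) k"
proof (cases k)
  case 0
  then show ?thesis by (simp add: racah_lattice_def)
next
  case (Suc m)
  define t where "t = dual_hahn_coeff \<gamma> N"
  define D where "D = (\<gamma> + 1 + real m) * (real m - real N) * (real m + 1)"
  have "(\<gamma> + 1 + real m) * (real m - real N) \<noteq> 0"
    using assms by (simp add: Suc algebra_simps)
  then have "D \<noteq> 0"
    unfolding D_def by simp
  have t_Suc: "D * t n (Suc m) = t n m * (real m - real n)"
    using \<open>D \<noteq> 0\<close> unfolding t_def D_def dual_hahn_coeff_Suc by simp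
  have t_Suc_Suc: "D * t (Suc n) (Suc m) = t n m * (- real n - 1)"
    using \<open>D \<noteq> 0\<close> unfolding t_def D_def dual_hahn_coeff_Suc_Suc by simp
  have t_pred: "D * (real n * t (n - 1) (Suc m)) = t n m * (real n - real m) * (real m - real n + 1)"
    using \<open>D \<noteq> 0\<close> unfolding t_def D_def dual_hahn_coeff_pred_Suc by simp
  have key: "racah_lattice \<gamma> \<delta> (Suc m) * (real m - real n) - D
      = dual_hahn_A \<gamma> N n * (- real n - 1)
        - (dual_hahn_A \<gamma> N n + dual_hahn_C \<delta> N n) * (real m - real n)
        + (real n - \<delta> - real N - 1) * (real n - real m) * (real m - real n + 1)"
    unfolding racah_lattice_def D_def dual_hahn_A_def dual_hahn_C_def of_nat_Suc by algebra
  have "D * (racah_lattice \<gamma> \<delta> (Suc m) * t n (Suc m) - t n m)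
      = t n m * (racah_lattice \<gamma> \<delta> (Suc m) * (real m - real n) - D)"
    using t_Suc by algebra
  also have "\<dots> = D * (dual_hahn_A \<gamma> N n * t (Suc n) (Suc m)
      - (dual_hahn_A \<gamma> N n + dual_hahn_C \<delta> N n) * t n (Suc m)
      + dual_hahn_C \<delta> N n * t (n - 1) (Suc m))"
    unfolding key using t_Suc t_Suc_Suc t_pred unfolding dual_hahn_C_def by algebra
  finally show ?thesis
    using \<open>D \<noteq> 0\<close> unfolding Suc t_def by simp
qed

lemma dual_hahn_poly_recurrence:
  assumes "n < N" and "\<And>k. 0 < k \<Longrightarrow> k \<le> N \<Longrightarrow> \<gamma> + real k \<noteq> 0"
  shows "y * poly (dual_hahn_poly \<gamma> \<delta> N n) y
       = dual_hahn_A \<gamma> N n * poly (dual_hahn_poly \<gamma> \<delta> N (Suc n)) y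
         - (dual_hahn_A \<gamma> N n + dual_hahn_C \<delta> N n) * poly (dual_hahn_poly \<gamma> \<delta> N n) y
         + dual_hahn_C \<delta> N n * poly (dual_hahn_poly \<gamma> \<delta> N (n - 1)) y"
proof -
  have extend: "dual_hahn_poly \<gamma> \<delta> N m = newton_poly (dual_hahn_coeff \<gamma> N m) (racah_lattice \<gamma> \<delta>) N"
    if "m \<le> N" for m
    unfolding dual_hahn_poly_def using that by (intro newton_poly_extend) (simp_all add: dual_hahn_coeff_eq_0)
  have "y * poly (newton_poly (dual_hahn_coeff \<gamma> N n) (racah_lattice \<gamma> \<delta>) N) y
       = dual_hahn_A \<gamma> N n * poly (newton_poly (dual_hahn_coeff \<gamma> N (Suc n)) (racah_lattice \<gamma> \<delta>) N) y
         - (dual_hahn_A \<gamma> N n + dual_hahn_C \<delta> N n) * poly (newton_poly (dual_hahn_coeff \<gamma> N n) (racah_lattice \<gamma> \<delta>) N) y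
         + dual_hahn_C \<delta> N n * poly (newton_poly (dual_hahn_coeff \<gamma> N (n - 1)) (racah_lattice \<gamma> \<delta>) N) y"
    using assms by (intro poly_newton_poly_three_term dual_hahn_coeff_recurrence) (simp_all add: dual_hahn_coeff_eq_0)
  then show ?thesis
    using assms(1) by (simp add: extend)
qed

lemma pochhammer_minus_mult_pochhammer:
  "pochhammer (- x) n * pochhammer (x + g) n = (\<Prod>l<n. real l * (real l + g) - x * (x + g))"
  unfolding pochhammer_prod atLeast0LessThan prod.distrib[symmetric]
  by (rule prod.cong) (simp_all add: algebra_simps)

lemma poly_dual_hahn_poly_lattice:
  "poly (dual_hahn_poly \<gamma> \<delta> N n) (racah_lattice \<gamma> \<delta> j)
     = hyp3F2 n (- real n) (- real j) (real j + \<gamma> + \<delta> + 1) (\<gamma> + 1) (- real N)"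
proof -
  have "(\<Prod>l<k. racah_lattice \<gamma> \<delta> l - racah_lattice \<gamma> \<delta> j)
      = pochhammer (- real j) k * pochhammer (real j + \<gamma> + \<delta> + 1) k" for k
    using pochhammer_minus_mult_pochhammer[of "real j" k "\<gamma> + \<delta> + 1"]
    by (simp add: racah_lattice_def add.assoc)
  then show ?thesis
    unfolding dual_hahn_poly_def poly_newton_poly hyp3F2_def
    by (intro sum.cong) (simp_all add: dual_hahn_coeff_def)
qed

lemma theta_eq_theta_0_plus_lattice:
  "j \<le> d \<Longrightarrow> theta d r s j = theta d r s 0 + racah_lattice (- s - real d - 1) (- r - real d - 1) j"
  by (simp add: theta_def racah_lattice_def of_nat_diff algebra_simps)

lemma inj_on_theta:
  assumes "-2 < r + s"
  shows "inj_on (theta d r s) {..d}"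
proof (rule inj_onI)
  fix j k assume "j \<in> {..d}" "k \<in> {..d}" and eq: "theta d r s j = theta d r s k"
  define a b where "a = real (d - j)" and "b = real (d - k)"
  have "(a - b) * (a + b + r + s + 1) = 0"
    using eq by (simp add: theta_def a_def[symmetric] b_def[symmetric] algebra_simps)
  moreover have "a + b + r + s + 1 > 0" if "a \<noteq> b"
  proof -
    from that have "1 \<le> a + b" by (auto simp: a_def b_def)
    then show ?thesis using assms by linarith
  qed
  ultimately have "a = b" by fastforce
  then show "j = k"
    using \<open>j \<in> {..d}\<close> \<open>k \<in> {..d}\<close> by (simp add: a_def b_def)
qed

(* u_i is the dual Hahn polynomial with gamma = -s - d - 1, delta = -r - d - 1, N = d, evaluated at
   theta_j - theta_0 = j (j + gamma + delta + 1). *)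
lemma dual_hahn_eq_pcompose:
  assumes "-2 < r + s" and "i \<le> d"
  shows "dual_hahn d r s i
       = pcompose (dual_hahn_poly (- s - real d - 1) (- r - real d - 1) d i) [:- theta d r s 0, 1:]"
proof -
  let ?p = "pcompose (dual_hahn_poly (- s - real d - 1) (- r - real d - 1) d i) [:- theta d r s 0, 1:]"
  have interpolates: "poly ?p (theta d r s j) = dual_hahn_val d r s i j" if "j \<le> d" for j
  proof -
    have "poly ?p (theta d r s j)
        = poly (dual_hahn_poly (- s - real d - 1) (- r - real d - 1) d i)
            (racah_lattice (- s - real d - 1) (- r - real d - 1) j)"
      unfolding poly_pcompose theta_eq_theta_0_plus_lattice[OF that] by simp
    also have "\<dots> = dual_hahn_val d r s i j"
      unfolding poly_dual_hahn_poly_lattice dual_hahn_val_def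
      by (rule arg_cong2[where f = "\<lambda>a b. hyp3F2 i (- real i) (- real j) a b (- real d)"]) simp_all
    finally show ?thesis .
  qed
  have "degree ?p \<le> d"
    using order.trans[OF degree_newton_poly assms(2)] by (simp add: degree_pcompose dual_hahn_poly_def)
  moreover have "q = ?p"
    if "degree q \<le> d" and q: "\<forall>j\<le>d. poly q (theta d r s j) = dual_hahn_val d r s i j" for q
  proof (rule poly_eqI_degree)
    fix x assume "x \<in> theta d r s ` {..d}"
    then obtain j where "j \<le> d" "x = theta d r s j" by blast
    then show "poly q x = poly ?p x"
      using q interpolates by simp
  next
    have "card (theta d r s ` {..d}) = Suc d"
      using card_image[OF inj_on_theta[OF assms(1)]] by simp
    then show "card (theta d r s ` {..d}) > degree q" "card (theta d r s ` {..d}) > degree ?p"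
      using \<open>degree q \<le> d\<close> \<open>degree ?p \<le> d\<close> by simp_all
  qed
  ultimately show ?thesis
    unfolding dual_hahn_def using interpolates by (intro the_equality) blast+
qed

section \<open>The dual Hahn polynomials for r + s = 0 as Racah polynomials\<close>

abbreviation racah_poly_spec :: "nat \<Rightarrow> real \<Rightarrow> nat \<Rightarrow> real poly" where
  "racah_poly_spec d r \<equiv> racah_poly (- real d - 1) r ((r - real d - 1) / 2) (- (r + real d) / 2 - 1)"

abbreviation racah_A_spec :: "nat \<Rightarrow> real \<Rightarrow> nat \<Rightarrow> real" where
  "racah_A_spec d r \<equiv> racah_A (- real d - 1) r ((r - real d - 1) / 2) (- (r + real d) / 2 - 1)"

abbreviation racah_C_spec :: "nat \<Rightarrow> real \<Rightarrow> nat \<Rightarrow> real" where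
  "racah_C_spec d r \<equiv> racah_C (- real d - 1) r ((r - real d - 1) / 2) (- (r + real d) / 2 - 1)"

abbreviation dual_hahn_poly_spec :: "nat \<Rightarrow> real \<Rightarrow> nat \<Rightarrow> real poly" where
  "dual_hahn_poly_spec d r \<equiv> dual_hahn_poly (r - real d - 1) (- r - real d - 1) d"

lemma add_of_int_neq_0_if_not_Ints:
  fixes r :: "'a::ring_1"
  assumes "r \<notin> \<int>"
  shows "r + of_int k \<noteq> 0"
proof
  assume "r + of_int k = 0"
  then have "r = of_int (- k)" by (simp add: eq_neg_iff_add_eq_0)
  with assms show False by simp
qed

lemma racah_A_C_eq_dual_hahn_A_C_div_4:
  assumes "r \<notin> \<int>"
  shows "racah_A_spec d r k = dual_hahn_A (r - real d - 1) d k / 4"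
    and "racah_C_spec d r k = dual_hahn_C (- r - real d - 1) d k / 4"
proof -
  have "2 * real k + (- real d - 1) + r \<noteq> 0" "2 * real k + (- real d - 1) + r + 1 \<noteq> 0"
    "2 * real k + (- real d - 1) + r + 2 \<noteq> 0"
    using add_of_int_neq_0_if_not_Ints[OF assms, of "2 * int k - int d - 1"]
      add_of_int_neq_0_if_not_Ints[OF assms, of "2 * int k - int d"]
      add_of_int_neq_0_if_not_Ints[OF assms, of "2 * int k - int d + 1"]
    by (simp_all add: algebra_simps)
  then show "racah_A_spec d r k = dual_hahn_A (r - real d - 1) d k / 4"
    and "racah_C_spec d r k = dual_hahn_C (- r - real d - 1) d k / 4"
    unfolding racah_A_def racah_C_def dual_hahn_A_def dual_hahn_C_def
    by (simp_all add: divide_eq_eq) (simp_all add: field_simps)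
qed

lemma dual_hahn_poly_rescaled_recurrence:
  assumes "r \<notin> \<int>" and "k < d"
  shows "y * poly (dual_hahn_poly_spec d r k) (4 * y)
       = racah_A_spec d r k * poly (dual_hahn_poly_spec d r (Suc k)) (4 * y)
         - (racah_A_spec d r k + racah_C_spec d r k) * poly (dual_hahn_poly_spec d r k) (4 * y)
         + racah_C_spec d r k * poly (dual_hahn_poly_spec d r (k - 1)) (4 * y)"
proof -
  have "r - real d - 1 + real j \<noteq> 0" for j
    using add_of_int_neq_0_if_not_Ints[OF assms(1), of "int j - int d - 1"] by (simp add: algebra_simps)
  then have "4 * y * poly (dual_hahn_poly_spec d r k) (4 * y)
      = dual_hahn_A (r - real d - 1) d k * poly (dual_hahn_poly_spec d r (Suc k)) (4 * y)
        - (dual_hahn_A (r - real d - 1) d k + dual_hahn_C (- r - real d - 1) d k) * poly (dual_hahn_poly_spec d r k) (4 * y)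
        + dual_hahn_C (- r - real d - 1) d k * poly (dual_hahn_poly_spec d r (k - 1)) (4 * y)"
    by (intro dual_hahn_poly_recurrence[OF assms(2)])
  then show ?thesis
    unfolding racah_A_C_eq_dual_hahn_A_C_div_4[OF assms(1)] by algebra
qed

lemma racah_poly_recurrence_at_dual_hahn_parameters:
  assumes "r \<notin> \<int>" and "k < d"
  shows "y * poly (racah_poly_spec d r k) y
       = racah_A_spec d r k * poly (racah_poly_spec d r (Suc k)) y
         - (racah_A_spec d r k + racah_C_spec d r k) * poly (racah_poly_spec d r k) y
         + racah_C_spec d r k * poly (racah_poly_spec d r (k - 1)) y"
proof (rule racah_poly_recurrence[OF assms(2)])
  note nonint = add_of_int_neq_0_if_not_Ints[OF assms(1)]
  fix j :: nat assume "0 < j" "j \<le> d"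
  have "- real d - 1 + real j \<noteq> 0"
    using \<open>j \<le> d\<close> by simp
  moreover have "r + (- (r + real d) / 2 - 1) + real j \<noteq> 0" "(r - real d - 1) / 2 + real j \<noteq> 0"
    using nonint[of "2 * int j - int d - 2"] nonint[of "2 * int j - int d - 1"]
    by (simp_all add: field_simps)
  ultimately show "(- real d - 1 + real j) * (r + (- (r + real d) / 2 - 1) + real j)
      * ((r - real d - 1) / 2 + real j) \<noteq> 0"
    by simp
next
  note nonint = add_of_int_neq_0_if_not_Ints[OF assms(1)]
  have "2 * real k + (- real d - 1) + r \<noteq> 0" "2 * real k + (- real d - 1) + r + 1 \<noteq> 0"
    "2 * real k + (- real d - 1) + r + 2 \<noteq> 0"
    using nonint[of "2 * int k - int d - 1"] nonint[of "2 * int k - int d"] nonint[of "2 * int k - int d + 1"]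
    by (simp_all add: algebra_simps)
  then show "(2 * real k + (- real d - 1) + r) * (2 * real k + (- real d - 1) + r + 1)
      * (2 * real k + (- real d - 1) + r + 2) \<noteq> 0"
    by simp
qed

lemma dual_hahn_pcompose_eq_racah_poly:
  assumes "r \<notin> \<int>" and "i \<le> d"
  shows "pcompose (dual_hahn d r (- r) i) [:real d * (real d + 1), 4:] = racah_poly_spec d r i"
proof -
  have "poly (pcompose (dual_hahn d r (- r) i) [:real d * (real d + 1), 4:]) y
      = poly (racah_poly_spec d r i) y" for y
  proof -
    let ?p = "\<lambda>k. poly (dual_hahn_poly_spec d r k) (4 * y)"
    let ?q = "\<lambda>k. poly (racah_poly_spec d r k) y"
    have "poly (pcompose (dual_hahn d r (- r) i) [:real d * (real d + 1), 4:]) y = ?p i"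
      using assms(2) by (simp add: dual_hahn_eq_pcompose poly_pcompose theta_def algebra_simps)
    also have "?p i = ?q i"
    proof (rule three_term_recurrence_unique[where A = "racah_A_spec d r" and C = "racah_C_spec d r"])
      show "?p 0 = ?q 0"
        by (simp add: dual_hahn_poly_def racah_poly_def poly_newton_poly)
    next
      fix k assume "k < i"
      then have "k < d" using assms(2) by simp
      show "racah_A_spec d r k \<noteq> 0"
        using \<open>k < d\<close> add_of_int_neq_0_if_not_Ints[OF assms(1), of "int k - int d"]
        unfolding racah_A_C_eq_dual_hahn_A_C_div_4(1)[OF assms(1)] dual_hahn_A_def by simp
      show "y * ?p k = racah_A_spec d r k * ?p (Suc k) - (racah_A_spec d r k + racah_C_spec d r k) * ?p k + racah_C_spec d r k * ?p (k - 1)"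
        by (rule dual_hahn_poly_rescaled_recurrence[OF assms(1) \<open>k < d\<close>])
      show "y * ?q k = racah_A_spec d r k * ?q (Suc k) - (racah_A_spec d r k + racah_C_spec d r k) * ?q k + racah_C_spec d r k * ?q (k - 1)"
        by (rule racah_poly_recurrence_at_dual_hahn_parameters[OF assms(1) \<open>k < d\<close>])
    qed
    finally show ?thesis .
  qed
  then show ?thesis
    by (intro poly_eq_poly_eq_iff[THEN iffD1] ext)
qed

section \<open>Nodes and weights\<close>

definition dual_hahn_index :: "nat \<Rightarrow> nat \<Rightarrow> nat" where
  "dual_hahn_index d j = (if 2 * j \<le> d then 2 * j else 2 * (d - j) + 1)"

lemma dual_hahn_index_lower: "j \<le> d div 2 \<Longrightarrow> dual_hahn_index d j = 2 * j"
  by (simp add: dual_hahn_index_def)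

lemma dual_hahn_index_upper: "d div 2 < j \<Longrightarrow> dual_hahn_index d j = 2 * (d - j) + 1"
  by (simp add: dual_hahn_index_def)

lemma dual_hahn_index_image: "dual_hahn_index d ` {0..d} = {0..d}"
proof
  show "dual_hahn_index d ` {0..d} \<subseteq> {0..d}"
    by (auto simp: dual_hahn_index_def)
  show "{0..d} \<subseteq> dual_hahn_index d ` {0..d}"
  proof
    fix i assume "i \<in> {0..d}"
    show "i \<in> dual_hahn_index d ` {0..d}"
    proof (cases "even i")
      case True
      then have "i = dual_hahn_index d (i div 2)" and "i div 2 \<in> {0..d}"
        using \<open>i \<in> {0..d}\<close> by (auto simp: dual_hahn_index_def)
      then show ?thesis by blast
    next
      case False
      then have "i = dual_hahn_index d (d - i div 2)" and "d - i div 2 \<in> {0..d}"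
        using \<open>i \<in> {0..d}\<close> by (auto simp: dual_hahn_index_def elim: oddE)
      then show ?thesis by blast
    qed
  qed
qed

lemma theta_dual_hahn_index:
  assumes "j \<le> d"
  shows "theta d r (- r) (dual_hahn_index d j) = (real d - 2 * real j) * (real d - 2 * real j + 1)"
  using assms by (auto simp: dual_hahn_index_def theta_def of_nat_diff algebra_simps)

lemma pochhammer_add_2_div:
  fixes a :: real
  assumes "0 < a"
  shows "pochhammer (a + 2) n / pochhammer a (Suc n) = (a + real n + 1) / (a * (a + 1))"
proof -
  have "a * ((a + 1) * pochhammer (a + 2) n) = pochhammer a (Suc n) * (a + real n + 1)"
    using pochhammer_rec[of a "Suc n"] pochhammer_rec[of "a + 1" n] pochhammer_Suc[of a "Suc n"]
    by (simp add: ac_simps)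
  moreover have "pochhammer a (Suc n) > 0"
    using assms by (intro pochhammer_pos)
  ultimately show ?thesis
    using assms by (simp add: divide_simps) (simp add: algebra_simps)
qed

lemma pochhammer_div_add_1:
  fixes a :: real
  assumes "0 < a"
  shows "pochhammer a n / pochhammer (a + 1) (Suc n) = a / ((a + real n) * (a + real n + 1))"
proof -
  have "a * pochhammer (a + 1) (Suc n) = pochhammer a n * ((a + real n) * (a + real n + 1))"
    using pochhammer_rec[of a "Suc n"] pochhammer_Suc[of a "Suc n"] pochhammer_Suc[of a n]
    by (simp add: algebra_simps)
  moreover have "pochhammer (a + 1) (Suc n) > 0"
    using assms by (intro pochhammer_pos) simp
  moreover have "a + real n > 0" "a + real n + 1 > 0"
    using assms by simp_all
  ultimately show ?thesis
    by (simp add: divide_simps)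
qed

lemma bstar_minus_eq:
  assumes "l < d"
  shows "bstar d r (- r) l = (real l - real d + r) * (2 * real d - real l + 1) / (2 * (2 * real d - 2 * real l + 1))"
proof -
  have "bstar d r (- r) l = (real d - real l) * (real l - real d + r)
      * (pochhammer (2 * real d - 2 * real l + 2) l / pochhammer (2 * real d - 2 * real l) (Suc l))"
    using assms by (simp add: bstar_def of_nat_diff algebra_simps)
  also have "\<dots> = (real d - real l) * (real l - real d + r)
      * ((2 * real d - real l + 1) / ((2 * real d - 2 * real l) * (2 * real d - 2 * real l + 1)))"
    using pochhammer_add_2_div[of "2 * real d - 2 * real l" l] assms by simp
  also have "\<dots> = (real l - real d + r) * (2 * real d - real l + 1) / (2 * (2 * real d - 2 * real l + 1))"
  proof -
    have "real d - real l > 0" "2 * real d - 2 * real l + 1 > 0"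
      using assms by simp_all
    then show ?thesis
      by (simp add: divide_simps) (simp add: algebra_simps)
  qed
  finally show ?thesis .
qed

lemma cstar_minus_eq:
  assumes "l \<le> d"
  shows "cstar d r (- r) l = real l * (real l - real d - r - 1) / (2 * (2 * real d - 2 * real l + 1))"
proof -
  have "cstar d r (- r) l = real l * (real l - real d - r - 1)
      * (pochhammer (real d - real l + 1) (d - l) / pochhammer (real d - real l + 1 + 1) (Suc (d - l)))"
    using assms by (simp add: cstar_def algebra_simps)
  also have "\<dots> = real l * (real l - real d - r - 1)
      * ((real d - real l + 1) / ((2 * real d - 2 * real l + 1) * (2 * real d - 2 * real l + 2)))"
    using pochhammer_div_add_1[of "real d - real l + 1" "d - l"] assms by (simp add: of_nat_diff algebra_simps)
  also have "\<dots> = real l * (real l - real d - r - 1) / (2 * (2 * real d - 2 * real l + 1))"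
  proof -
    have "2 * real d - 2 * real l + 1 > 0" "2 * real d - 2 * real l + 2 > 0"
      using assms by simp_all
    then show ?thesis
      by (simp add: divide_simps) (simp add: algebra_simps)
  qed
  finally show ?thesis .
qed

lemma kstar_Suc: "kstar d r s (Suc i) = kstar d r s i * (bstar d r s i / cstar d r s (Suc i))"
  unfolding kstar_def by (simp add: atLeastAtMostSuc_conv field_simps)

lemma kbar_Suc: "kbar d r (Suc j) = kbar d r j * (bbar d r j / cbar d r (Suc j))"
  unfolding kbar_def by (simp add: atLeastAtMostSuc_conv field_simps)

lemma dual_hahn_weight_ratio:
  assumes "i < d"
  shows "bstar d r (- r) i / cstar d r (- r) (Suc i)
       = (real i - real d + r) * (2 * real d - real i + 1) * (2 * real d - 2 * real i - 1)
         / ((real i + 1) * (real i - real d - r) * (2 * real d - 2 * real i + 1))"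
proof -
  have "bstar d r (- r) i / cstar d r (- r) (Suc i)
      = ((real i - real d + r) * (2 * real d - real i + 1) / (2 * (2 * real d - 2 * real i + 1)))
        / ((real i + 1) * (real i - real d - r) / (2 * (2 * real d - 2 * real i - 1)))"
    using assms by (simp add: bstar_minus_eq cstar_minus_eq algebra_simps)
  also have "\<dots> = 2 * ((real i - real d + r) * (2 * real d - real i + 1) * (2 * real d - 2 * real i - 1))
      / (2 * ((real i + 1) * (real i - real d - r) * (2 * real d - 2 * real i + 1)))"
    unfolding divide_divide_times_eq by (simp only: ac_simps)
  finally show ?thesis
    by (simp only: mult_divide_mult_cancel_left_if) simp
qed

lemma of_int_double_add_1_neq_0: "(2 * of_int k + 1 :: real) \<noteq> 0"
proof
  assume "2 * of_int k + 1 = (0 :: real)"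
  then have "of_int (2 * k + 1) = (of_int 0 :: real)" by simp
  then have "2 * k + 1 = 0" by (simp only: of_int_eq_iff)
  then show False by presburger
qed

lemma racah_weight_ratio:
  assumes "j \<le> d"
  shows "bbar d r j / cbar d r (Suc j)
       = (real d - real j) * (2 * real d - 2 * real j + 1) * (real d - 2 * real j - r - 1) * (real d - 2 * real j - r)
           * (2 * real d - 4 * real j - 3)
         / ((real j + 1) * (2 * real j + 1) * (real d - 2 * real j + r - 1) * (real d - 2 * real j + r)
           * (2 * real d - 4 * real j + 1))"
proof -
  let ?a = "2 * real d - 4 * real j - 1"
  have "?a \<noteq> 0"
    using of_int_double_add_1_neq_0[of "int d - 2 * int j - 1"] by (simp add: algebra_simps)
  have "bbar d r j / cbar d r (Suc j)
      = ((real d - real j) * (2 * real d - 2 * real j + 1) * (real d - 2 * real j - r - 1) * (real d - 2 * real j - r)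
          / (2 * ?a * (2 * real d - 4 * real j + 1)))
        / ((real j + 1) * (2 * real j + 1) * (real d - 2 * real j + r - 1) * (real d - 2 * real j + r)
          / (2 * (2 * real d - 4 * real j - 3) * ?a))"
    using assms by (simp add: bbar_def cbar_def of_nat_diff algebra_simps)
  also have "\<dots> = (2 * ?a) * ((real d - real j) * (2 * real d - 2 * real j + 1) * (real d - 2 * real j - r - 1)
          * (real d - 2 * real j - r) * (2 * real d - 4 * real j - 3))
      / ((2 * ?a) * ((real j + 1) * (2 * real j + 1) * (real d - 2 * real j + r - 1) * (real d - 2 * real j + r)
          * (2 * real d - 4 * real j + 1)))"
    unfolding divide_divide_times_eq by (simp only: ac_simps)
  finally show ?thesis
    using \<open>?a \<noteq> 0\<close> by (simp only: mult_divide_mult_cancel_left_if) simp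
qed

lemma weight_ratio_below_middle:
  assumes "r \<notin> \<int>" and "2 * j + 2 \<le> d"
  shows "bstar d r (- r) (2 * j) / cstar d r (- r) (Suc (2 * j))
           * (bstar d r (- r) (Suc (2 * j)) / cstar d r (- r) (Suc (Suc (2 * j))))
         = bbar d r j / cbar d r (Suc j)"
proof -
  note nonint = add_of_int_neq_0_if_not_Ints[OF assms(1)]
  note odd = of_int_double_add_1_neq_0
  have nz: "2 * real d - 4 * real j - 1 \<noteq> 0" "2 * real d - 4 * real j + 1 \<noteq> 0" "2 * real d - 4 * real j - 3 \<noteq> 0"
    "real d - 2 * real j + r - 1 \<noteq> 0" "real d - 2 * real j + r \<noteq> 0" "2 * real j + 1 \<noteq> 0" "real j + 1 \<noteq> 0"
    using odd[of "int d - 2 * int j - 1"] odd[of "int d - 2 * int j"] odd[of "int d - 2 * int j - 2"]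
      nonint[of "int d - 2 * int j - 1"] nonint[of "int d - 2 * int j"]
    by (simp_all add: algebra_simps)
  have "2 * j < d" "Suc (2 * j) < d" "j \<le> d"
    using assms(2) by simp_all
  note ratios = dual_hahn_weight_ratio[OF this(1)] dual_hahn_weight_ratio[OF this(2)]
    racah_weight_ratio[OF this(3)]
  have real_of: "real (2 * j) = 2 * real j" "real (Suc (2 * j)) = 2 * real j + 1"
    by simp_all
  show ?thesis
    unfolding ratios times_divide_times_eq
    apply (subst frac_eq_eq)
      apply (simp_all only: mult_eq_0_iff de_Morgan_disj)
      apply (use nz in \<open>simp_all add: algebra_simps\<close>)[2]
    apply (use real_of in algebra)
    done
qed

lemma weight_ratio_odd_middle:
  assumes "r \<notin> \<int>" and "d = 2 * j + 1"
  shows "bstar d r (- r) (2 * j) / cstar d r (- r) (Suc (2 * j)) = bbar d r j / cbar d r (Suc j)"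
proof -
  note nonint = add_of_int_neq_0_if_not_Ints[OF assms(1)]
  have nz: "r \<noteq> 0" "r + 1 \<noteq> 0" "- 1 - r \<noteq> 0"
    using nonint[of 0] nonint[of 1] by (simp_all add: algebra_simps)
  have "2 * j < d" "j \<le> d"
    using assms(2) by simp_all
  note ratios = dual_hahn_weight_ratio[OF this(1)] racah_weight_ratio[OF this(2)]
  have real_of: "real (2 * j) = 2 * real j" "real d = 2 * real j + 1"
    using assms(2) by simp_all
  show ?thesis
    unfolding ratios
    apply (subst frac_eq_eq)
      apply (simp_all only: mult_eq_0_iff de_Morgan_disj)
      apply (use nz real_of in \<open>simp_all add: algebra_simps\<close>)[2]
    apply (use real_of in algebra)
    done
qed

lemma weight_ratio_even_middle:
  assumes "r \<notin> \<int>" and "d = 2 * j" and "0 < j"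
  shows "bstar d r (- r) (d - 1) / cstar d r (- r) (Suc (d - 1)) * (bbar d r j / cbar d r (Suc j)) = 1"
proof -
  note nonint = add_of_int_neq_0_if_not_Ints[OF assms(1)]
  have nz: "r \<noteq> 0" "r - 1 \<noteq> 0" "- 1 - r \<noteq> 0"
    using nonint[of 0] nonint[of "-1"] nonint[of 1] by (simp_all add: algebra_simps)
  have "d - 1 < d" "j \<le> d"
    using assms(2,3) by simp_all
  note ratios = dual_hahn_weight_ratio[OF this(1)] racah_weight_ratio[OF this(2)]
  have real_of: "real (d - 1) = 2 * real j - 1" "real d = 2 * real j"
    using assms(2,3) by (simp_all add: of_nat_diff)
  show ?thesis
    unfolding ratios times_divide_times_eq
    apply (subst divide_eq_1_iff)
    apply (rule conjI)
     apply (simp only: mult_eq_0_iff de_Morgan_disj)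
     apply (use nz real_of assms(3) in \<open>simp add: algebra_simps\<close>)
    apply (use real_of in algebra)
    done
qed

lemma weight_ratio_above_middle:
  assumes "r \<notin> \<int>" and "Suc j \<le> d" and "d < 2 * j" and "t = 2 * (d - j) - 1"
  shows "bstar d r (- r) t / cstar d r (- r) (Suc t)
           * (bstar d r (- r) (Suc t) / cstar d r (- r) (Suc (Suc t)))
           * (bbar d r j / cbar d r (Suc j)) = 1"
proof -
  note nonint = add_of_int_neq_0_if_not_Ints[OF assms(1)]
  note odd = of_int_double_add_1_neq_0
  have nz: "2 * real d - 4 * real j + 1 \<noteq> 0" "2 * real d - 4 * real j - 3 \<noteq> 0" "2 * real d - 4 * real j - 1 \<noteq> 0"
    "real d - 2 * real j + r - 1 \<noteq> 0" "real d - 2 * real j + r \<noteq> 0"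
    "real d - 2 * real j - r - 1 \<noteq> 0" "real d - 2 * real j - r \<noteq> 0"
    "2 * real d - 2 * real j \<noteq> 0" "2 * real d - 2 * real j + 1 \<noteq> 0"
    using odd[of "int d - 2 * int j"] odd[of "int d - 2 * int j - 2"] odd[of "int d - 2 * int j - 1"]
      nonint[of "int d - 2 * int j - 1"] nonint[of "int d - 2 * int j"]
      nonint[of "2 * int j + 1 - int d"] nonint[of "2 * int j - int d"] assms(2)
    by (simp_all add: algebra_simps)
  have real_of: "real t = 2 * real d - 2 * real j - 1" "real (Suc t) = 2 * real d - 2 * real j"
    using assms(2-4) by (simp_all add: of_nat_diff)
  have "t < d" "Suc t < d" "j \<le> d"
    using assms(2-4) by simp_all
  note ratios = dual_hahn_weight_ratio[OF this(1)] dual_hahn_weight_ratio[OF this(2)]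
    racah_weight_ratio[OF this(3)]
  show ?thesis
    unfolding ratios times_divide_times_eq
    apply (subst divide_eq_1_iff)
    apply (rule conjI)
     apply (simp only: mult_eq_0_iff de_Morgan_disj)
     apply (use nz real_of in \<open>simp add: algebra_simps\<close>)
    apply (use real_of in algebra)
    done
qed

lemma kstar_dual_hahn_index_Suc:
  assumes "r \<notin> \<int>" and "Suc j \<le> d"
  shows "kstar d r (- r) (dual_hahn_index d (Suc j))
       = kstar d r (- r) (dual_hahn_index d j) * (bbar d r j / cbar d r (Suc j))"
proof -
  consider (below) "2 * j + 2 \<le> d" | (odd) "d = 2 * j + 1" | (even) "d = 2 * j" | (above) "d < 2 * j"
    by linarith
  then show ?thesis
  proof cases
    case below
    then have "dual_hahn_index d (Suc j) = Suc (Suc (2 * j))" "dual_hahn_index d j = 2 * j"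
      by (simp_all add: dual_hahn_index_def)
    then show ?thesis
      by (simp only: kstar_Suc mult.assoc weight_ratio_below_middle[OF assms(1) below])
  next
    case odd
    then have "dual_hahn_index d (Suc j) = Suc (2 * j)" "dual_hahn_index d j = 2 * j"
      by (simp_all add: dual_hahn_index_def)
    then show ?thesis
      by (simp only: kstar_Suc weight_ratio_odd_middle[OF assms(1) odd])
  next
    case even
    then have "0 < j" using assms(2) by simp
    then have "dual_hahn_index d (Suc j) = d - 1" "dual_hahn_index d j = Suc (d - 1)"
      using even by (simp_all add: dual_hahn_index_def)
    then show ?thesis
      by (simp only: kstar_Suc mult.assoc weight_ratio_even_middle[OF assms(1) even \<open>0 < j\<close>] mult_1_right)
  next
    case above
    define t where "t = 2 * (d - j) - 1"
    have "dual_hahn_index d (Suc j) = t" "dual_hahn_index d j = Suc (Suc t)"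
      using above assms(2) by (simp_all add: dual_hahn_index_def t_def)
    then show ?thesis
      by (simp only: kstar_Suc mult.assoc weight_ratio_above_middle[OF assms(1,2) above t_def, unfolded mult.assoc]
          mult_1_right)
  qed
qed

lemma kbar_eq_kstar_dual_hahn_index:
  assumes "r \<notin> \<int>"
  shows "j \<le> d \<Longrightarrow> kbar d r j = kstar d r (- r) (dual_hahn_index d j)"
proof (induction j)
  case 0
  then show ?case by (simp add: kbar_def kstar_def dual_hahn_index_def)
next
  case (Suc j)
  then show ?case
    by (simp add: kbar_Suc kstar_dual_hahn_index_Suc[OF assms])
qed

lemma not_Ints_if_abs_less_1:
  fixes r :: real
  assumes "-1 < r" and "r < 1" and "r \<noteq> 0"
  shows "r \<notin> \<int>"
proof
  assume "r \<in> \<int>"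
  then obtain k where "r = of_int k" by (elim Ints_cases)
  with assms show False by simp
qed

theorem theorem1p4:
  fixes d :: nat and r s :: real
  assumes "r > -1" and "s > -1" and "r \<noteq> 0" and "r + s = 0"
  defines "\<alpha> \<equiv> - real d - 1"
      and "\<beta> \<equiv> r"
      and "\<gamma> \<equiv> (r - real d - 1) / 2"
      and "\<delta> \<equiv> - (r + real d) / 2 - 1"
  shows "(\<forall>i\<le>d. pcompose (dual_hahn d r s i) [: real d * (real d + 1), 4 :]
                  = racah_poly \<alpha> \<beta> \<gamma> \<delta> i)
       \<and> (\<forall>j\<le>d. 4 * real j * (real j + \<gamma> + \<delta> + 1) + real d * (real d + 1)
                  = (real d - 2 * real j) * (real d - 2 * real j + 1))
       \<and> (\<forall>j\<le>d div 2. 4 * real j * (real j + \<gamma> + \<delta> + 1) + real d * (real d + 1)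
                  = theta d r s (2 * j))
       \<and> (\<forall>j. d div 2 < j \<and> j \<le> d \<longrightarrow>
              4 * real j * (real j + \<gamma> + \<delta> + 1) + real d * (real d + 1)
                  = theta d r s (2 * (d - j) + 1))
       \<and> (\<lambda>j. 4 * real j * (real j + \<gamma> + \<delta> + 1) + real d * (real d + 1)) ` {0..d}
            = theta d r s ` {0..d}
       \<and> (\<forall>j\<le>d div 2. kbar d r j = kstar d r s (2 * j))
       \<and> (\<forall>j. d div 2 < j \<and> j \<le> d \<longrightarrow> kbar d r j = kstar d r s (2 * (d - j) + 1))"
proof -
  have s: "s = - r" using assms(4) by simp
  have r: "r \<notin> \<int>" using assms(1-4) by (intro not_Ints_if_abs_less_1) simp_all
  define f where "f j = 4 * real j * (real j + \<gamma> + \<delta> + 1) + real d * (real d + 1)" for j :: nat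
  have f_theta: "f j = theta d r s (dual_hahn_index d j)" if "j \<le> d" for j
    using theta_dual_hahn_index[OF that, of r] unfolding f_def s \<gamma>_def \<delta>_def by (simp add: field_simps)
  have "f ` {0..d} = theta d r s ` dual_hahn_index d ` {0..d}"
    using f_theta by (force simp: image_image)
  then have "f ` {0..d} = theta d r s ` {0..d}"
    by (simp only: dual_hahn_index_image)
  moreover have "\<forall>i\<le>d. pcompose (dual_hahn d r s i) [: real d * (real d + 1), 4 :] = racah_poly \<alpha> \<beta> \<gamma> \<delta> i"
    using dual_hahn_pcompose_eq_racah_poly[OF r] unfolding s \<alpha>_def \<beta>_def \<gamma>_def \<delta>_def by blast
  moreover have "\<forall>j\<le>d. f j = (real d - 2 * real j) * (real d - 2 * real j + 1)"
    using f_theta theta_dual_hahn_index unfolding s by simp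
  moreover have "f j = theta d r s (2 * j) \<and> kbar d r j = kstar d r s (2 * j)" if "j \<le> d div 2" for j
    using that f_theta kbar_eq_kstar_dual_hahn_index[OF r] unfolding s
    by (simp add: dual_hahn_index_lower div_le_dividend order.trans[OF that])
  moreover have "f j = theta d r s (2 * (d - j) + 1) \<and> kbar d r j = kstar d r s (2 * (d - j) + 1)"
    if "d div 2 < j" and "j \<le> d" for j
    using that f_theta kbar_eq_kstar_dual_hahn_index[OF r] unfolding s
    by (simp add: dual_hahn_index_upper)
  ultimately show ?thesis
    unfolding f_def by blast
qed

end
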